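(* Let $\varepsilon\in(0,1]$, $\mathrm{Bo}>0$, $\nu,t\geq0$, and let $f,\zeta^{\rm app}\in\mathbb{A}^4_{\nu t}$; set $\zeta^{\rm MU}:=\zeta^{\rm app}+f$. Define $$N_1(f,\zeta^{\rm app})=f\partial_x^4f+\partial_xf\partial_x^3f+f\partial_x^4\zeta^{\rm app}+\zeta^{\rm app}\partial_x^4f+\partial_xf\partial_x^3\zeta^{\rm app}+\partial_x\zeta^{\rm app}\partial_x^3f,$$ $$N_2(f,\zeta^{\rm app})=f\partial_x^2f+(\partial_xf)^2+f\partial_x^2\zeta^{\rm app}+2\partial_xf\partial_x\zeta^{\rm app}+\zeta^{\rm app}\partial_x^2f.$$ Then $$\tfrac{\varepsilon}{\mathrm{Bo}}|N_1(f,\zeta^{\rm app})|_{0,\nu t}+\varepsilon|N_2(f,\zeta^{\rm app})|_{0,\nu t}\leq 2\varepsilon\left(\tfrac{1}{\mathrm{Bo}}+1\right)\left(|\zeta^{\rm app}|_{0,\nu t}|f|_{4,\nu t}+\left(2|\zeta^{\rm app}|_{4,\nu t}+|\zeta^{\rm MU}|_{4,\nu t}\right)|f|_{0,\nu t}\right).$$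
   Context: $\mathbb{T}=\mathbb{R}/2\pi\mathbb{Z}$. For $g\in L^1(\mathbb{T})$, $\widehat g(n)=\frac1{2\pi}\int_{\mathbb{T}}ge^{-inx}dx$; for $s,\lambda\geq0$, $|g|_{s,\lambda}=\sum_{n\in\mathbb{Z}}(1+|n|)^se^{\lambda|n|}|\widehat g(n)|$ and $\mathbb{A}^s_\lambda$ is the space of $g$ with finite norm. *)

theory Defs
  imports "HOL-Analysis.Analysis"
begin

text \<open>Functions on the torus T = R/2piZ are modelled as 2pi-periodic functions
  real => complex.  L^1(T): periodic and absolutely integrable on [0,2pi].\<close>

definition in_L1T :: "(real \<Rightarrow> complex) \<Rightarrow> bool" where
  "in_L1T g \<longleftrightarrow> (\<forall>x. g (x + 2 * pi) = g x) \<and> g absolutely_integrable_on {0..2 * pi}"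

definition fcoeff :: "(real \<Rightarrow> complex) \<Rightarrow> int \<Rightarrow> complex" where
  "fcoeff g n = complex_of_real (1 / (2 * pi)) *
      integral {0..2 * pi} (\<lambda>x. g x * exp (- \<i> * of_int n * of_real x))"

definition wght :: "real \<Rightarrow> real \<Rightarrow> int \<Rightarrow> real" where
  "wght s lam n = (1 + real_of_int \<bar>n\<bar>) powr s * exp (lam * real_of_int \<bar>n\<bar>)"

definition anorm :: "real \<Rightarrow> real \<Rightarrow> (real \<Rightarrow> complex) \<Rightarrow> real" where
  "anorm s lam g = (\<Sum>\<^sub>\<infinity>n\<in>(UNIV::int set). wght s lam n * norm (fcoeff g n))"

definition in_A :: "real \<Rightarrow> real \<Rightarrow> (real \<Rightarrow> complex) \<Rightarrow> bool" where
  "in_A s lam g \<longleftrightarrow> in_L1T g \<and>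
     (\<lambda>n. wght s lam n * norm (fcoeff g n)) summable_on (UNIV::int set)"

text \<open>k-th derivative of g in A^k, given by its (absolutely convergent) Fourier
  series: the function with Fourier coefficients (i n)^k hat g(n).\<close>
definition dx :: "nat \<Rightarrow> (real \<Rightarrow> complex) \<Rightarrow> real \<Rightarrow> complex" where
  "dx k g x = (\<Sum>\<^sub>\<infinity>n\<in>(UNIV::int set).
      (\<i> * of_int n) ^ k * fcoeff g n * exp (\<i> * of_int n * of_real x))"

definition N1 :: "(real \<Rightarrow> complex) \<Rightarrow> (real \<Rightarrow> complex) \<Rightarrow> real \<Rightarrow> complex" where
  "N1 f z x = f x * dx 4 f x + dx 1 f x * dx 3 f x + f x * dx 4 z x + z x * dx 4 f x
      + dx 1 f x * dx 3 z x + dx 1 z x * dx 3 f x"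

definition N2 :: "(real \<Rightarrow> complex) \<Rightarrow> (real \<Rightarrow> complex) \<Rightarrow> real \<Rightarrow> complex" where
  "N2 f z x = f x * dx 2 f x + (dx 1 f x)^2 + f x * dx 2 z x + 2 * dx 1 f x * dx 1 z x
      + z x * dx 2 f x"

end

theory Submission
  imports Defs
begin

text \<open>The Fourier coefficients of a product \<open>u \<cdot> \<partial>\<^sup>k g\<close> are the convolution of those of \<open>u\<close>
  with \<open>(i n)\<^sup>k\<close> times those of \<open>g\<close>. As the weight \<open>exp (\<lambda> |n|)\<close> is submultiplicative, the
  weighted \<open>\<ell>\<^sup>1\<close> norm of such a convolution is bounded by a double sum over \<open>(p, q)\<close>, in which
  Young's inequality splits the polynomial factor \<open>|p|\<^sup>j |q|\<^sup>k\<close> (\<open>j + k \<le> 4\<close>) into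
  \<open>a/4 (1 + |p|)\<^sup>4 + b/4 (1 + |q|)\<^sup>4\<close> with \<open>a + b = 4\<close>. Applied to each term, this bounds both
  \<open>|N\<^sub>1|\<^sub>0\<close> and \<open>|N\<^sub>2|\<^sub>0\<close> by \<open>2 (|f|\<^sub>0 |f|\<^sub>4 + |f|\<^sub>0 |\<zeta>|\<^sub>4 + |\<zeta>|\<^sub>0 |f|\<^sub>4)\<close>, and the
  triangle inequality \<open>|f|\<^sub>4 \<le> |zMU|\<^sub>4 + |\<zeta>|\<^sub>4\<close> gives the claimed bound.\<close>

section \<open>Trigonometric series\<close>

definition trig_series :: "(int \<Rightarrow> complex) \<Rightarrow> real \<Rightarrow> complex" where
  "trig_series c x = (\<Sum>\<^sub>\<infinity>m\<in>UNIV. c m * exp (\<i> * of_int m * of_real x))"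

lemma filterlim_symmetric_int_intervals:
  "filterlim (\<lambda>N::nat. {-int N..int N}) (finite_subsets_at_top UNIV) sequentially"
  unfolding filterlim_finite_subsets_at_top
proof (intro allI impI)
  fix X :: "int set"
  assume "finite X \<and> X \<subseteq> UNIV"
  then obtain k where k: "abs ` X \<subseteq> {..k}"
    by (auto simp: finite_int_iff_bounded_le)
  have "X \<subseteq> {-int N..int N}" if "nat k \<le> N" for N
    using k that by (force simp: abs_le_iff)
  then show "\<forall>\<^sub>F N in sequentially.
      finite {-int N..int N} \<and> X \<subseteq> {-int N..int N} \<and> {-int N..int N} \<subseteq> UNIV"
    by (intro eventually_sequentiallyI[of "nat k"]) auto
qed

lemma tendsto_infsum_symmetric_partial_sums:
  fixes f :: "int \<Rightarrow> 'a::{comm_monoid_add,t2_space}"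
  assumes "f summable_on UNIV"
  shows "(\<lambda>N. sum f {-int N..int N}) \<longlonglongrightarrow> infsum f UNIV"
  using filterlim_compose[OF infsum_tendsto[OF assms] filterlim_symmetric_int_intervals] by simp

lemma exp_i_int_times_periodic:
  "exp (\<i> * of_int m * of_real (x + 2 * pi)) = exp (\<i> * of_int m * of_real x)"
proof -
  have "exp (\<i> * of_int m * of_real (x + 2 * pi))
      = exp (\<i> * of_int m * of_real x) * exp ((2 * of_int m * pi) * \<i>)"
    by (simp add: algebra_simps flip: exp_add)
  also have "exp ((2 * of_int m * pi) * \<i>) = 1"
    using exp_integer_2pi[of "of_int m"] by simp
  finally show ?thesis by simp
qed

lemma absolutely_integrable_mult_continuous:
  fixes u v :: "real \<Rightarrow> complex"
  assumes "u absolutely_integrable_on {a..b}" and "continuous_on {a..b} v"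
  shows "(\<lambda>x. u x * v x) absolutely_integrable_on {a..b}"
proof -
  have "v \<in> borel_measurable (lebesgue_on {a..b})"
    using assms(2) by (intro continuous_imp_measurable_on_sets_lebesgue) auto
  moreover have "bounded (v ` {a..b})"
    using assms(2) by (intro compact_imp_bounded compact_continuous_image) auto
  ultimately have "(\<lambda>x. v x * u x) absolutely_integrable_on {a..b}"
    using absolutely_integrable_bounded_measurable_product[OF bilinear_times _ _ _ assms(1)] by simp
  then show ?thesis by (simp add: mult.commute)
qed

lemma in_L1T_mult_exp_absolutely_integrable:
  "in_L1T u \<Longrightarrow> (\<lambda>x. u x * exp (c * of_real x)) absolutely_integrable_on {0..2 * pi}"
  unfolding in_L1T_def by (intro absolutely_integrable_mult_continuous) (auto intro!: continuous_intros)

lemma in_L1T_mult_exp_integrable: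
  "in_L1T u \<Longrightarrow> (\<lambda>x. u x * exp (c * of_real x)) integrable_on {0..2 * pi}"
  using in_L1T_mult_exp_absolutely_integrable absolutely_integrable_on_def by blast

lemma norm_fcoeff_le:
  assumes "in_L1T u"
  shows "norm (fcoeff u n) \<le> integral {0..2 * pi} (\<lambda>x. norm (u x)) / (2 * pi)"
proof -
  have "(\<lambda>x. norm (u x)) integrable_on {0..2 * pi}"
    using assms by (simp add: in_L1T_def absolutely_integrable_on_def)
  then have "norm (integral {0..2 * pi} (\<lambda>x. u x * exp (- \<i> * of_int n * of_real x)))
      \<le> integral {0..2 * pi} (\<lambda>x. norm (u x))"
    by (intro integral_norm_bound_integral in_L1T_mult_exp_integrable assms) (simp_all add: norm_mult)
  then show ?thesis
    unfolding fcoeff_def by (simp add: norm_divide norm_mult divide_right_mono)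
qed

lemma norm_trig_poly_le:
  assumes "(\<lambda>m. norm (c m)) summable_on UNIV" and "finite M"
  shows "norm (\<Sum>m\<in>M. c m * exp (\<i> * of_int m * of_real x)) \<le> (\<Sum>\<^sub>\<infinity>m\<in>UNIV. norm (c m))"
proof -
  have "norm (\<Sum>m\<in>M. c m * exp (\<i> * of_int m * of_real x)) \<le> (\<Sum>m\<in>M. norm (c m))"
    by (rule order_trans[OF norm_sum]) (simp add: norm_mult)
  also have "\<dots> \<le> (\<Sum>\<^sub>\<infinity>m\<in>UNIV. norm (c m))"
    using assms by (intro finite_sum_le_infsum) auto
  finally show ?thesis .
qed

lemma norm_trig_series_le:
  assumes "(\<lambda>m. norm (c m)) summable_on UNIV"
  shows "norm (trig_series c x) \<le> (\<Sum>\<^sub>\<infinity>m\<in>UNIV. norm (c m))"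
  unfolding trig_series_def using norm_infsum_bound[of "\<lambda>m. c m * exp (\<i> * of_int m * of_real x)"]
  using assms by (simp add: norm_mult)

lemma trig_series_symmetric_partial_sums:
  assumes "(\<lambda>m. norm (c m)) summable_on UNIV"
  shows "(\<lambda>N. \<Sum>m\<in>{-int N..int N}. c m * exp (\<i> * of_int m * of_real x)) \<longlonglongrightarrow> trig_series c x"
proof -
  have "(\<lambda>m. c m * exp (\<i> * of_int m * of_real x)) summable_on UNIV"
    using assms by (rule abs_summable_summable[OF summable_on_cong[THEN iffD1], rotated]) (simp add: norm_mult)
  then show ?thesis
    unfolding trig_series_def by (rule tendsto_infsum_symmetric_partial_sums)
qed

lemma integral_mult_trig_poly:
  assumes "in_L1T u" and "finite M"
  shows "integral {0..2 * pi}
      (\<lambda>x. u x * (\<Sum>m\<in>M. c m * exp (\<i> * of_int m * of_real x)) * exp (- \<i> * of_int k * of_real x))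
    = complex_of_real (2 * pi) * (\<Sum>m\<in>M. fcoeff u (k - m) * c m)"
proof -
  have "exp (\<i> * of_int m * of_real x) * exp (- \<i> * of_int k * of_real x)
      = exp (- \<i> * of_int (k - m) * of_real x)" for m x
    by (simp add: algebra_simps flip: exp_add)
  then have "u x * (\<Sum>m\<in>M. c m * exp (\<i> * of_int m * of_real x)) * exp (- \<i> * of_int k * of_real x)
      = (\<Sum>m\<in>M. c m * (u x * exp (- \<i> * of_int (k - m) * of_real x)))" for x
    by (simp add: sum_distrib_left sum_distrib_right mult.assoc mult.left_commute)
  moreover have "(\<lambda>x. c m * (u x * exp (- \<i> * of_int (k - m) * of_real x))) integrable_on {0..2 * pi}"
    for m using in_L1T_mult_exp_integrable[OF assms(1)] by (rule integrable_on_mult_right)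
  moreover have "integral {0..2 * pi} (\<lambda>x. u x * exp (- \<i> * of_int (k - m) * of_real x))
      = complex_of_real (2 * pi) * fcoeff u (k - m)" for m
    unfolding fcoeff_def by simp
  ultimately show ?thesis
    using assms(2) by (simp add: integral_sum sum_distrib_left mult_ac del: of_int_diff)
qed

lemma summable_fcoeff_convolution:
  assumes u: "in_L1T u" and c: "(\<lambda>m. norm (c m)) summable_on UNIV"
  shows "(\<lambda>m. fcoeff u (k - m) * c m) summable_on UNIV"
proof (rule abs_summable_summable, rule summable_on_comparison_test)
  show "(\<lambda>m. integral {0..2 * pi} (\<lambda>x. norm (u x)) / (2 * pi) * norm (c m)) summable_on UNIV"
    using c by (rule summable_on_cmult_right)
  show "norm (fcoeff u (k - m) * c m) \<le> integral {0..2 * pi} (\<lambda>x. norm (u x)) / (2 * pi) * norm (c m)"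
    for m unfolding norm_mult by (intro mult_right_mono norm_fcoeff_le[OF u]) simp
qed simp

lemma integral_mult_trig_series:
  assumes u: "in_L1T u" and c: "(\<lambda>m. norm (c m)) summable_on UNIV"
  shows "(\<lambda>x. u x * trig_series c x * exp (- \<i> * of_int k * of_real x)) integrable_on {0..2 * pi}"
    and "integral {0..2 * pi} (\<lambda>x. u x * trig_series c x * exp (- \<i> * of_int k * of_real x))
      = complex_of_real (2 * pi) * (\<Sum>\<^sub>\<infinity>m\<in>UNIV. fcoeff u (k - m) * c m)"
proof -
  define C where "C = (\<Sum>\<^sub>\<infinity>m\<in>UNIV. norm (c m))"
  define g where "g N x = u x * (\<Sum>m\<in>{-int N..int N}. c m * exp (\<i> * of_int m * of_real x))
      * exp (- \<i> * of_int k * of_real x)" for N :: nat and x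
  have "g N absolutely_integrable_on {0..2 * pi}" for N
    using u unfolding g_def in_L1T_def mult.assoc
    by (intro absolutely_integrable_mult_continuous) (auto intro!: continuous_intros)
  then have g_int: "g N integrable_on {0..2 * pi}" for N
    by (simp add: absolutely_integrable_on_def)
  have dom_int: "(\<lambda>x. norm (u x) * C) integrable_on {0..2 * pi}"
    using u by (simp add: in_L1T_def absolutely_integrable_on_def integrable_on_mult_left)
  have g_le: "norm (g N x) \<le> norm (u x) * C" for N x
    unfolding g_def C_def using norm_trig_poly_le[OF c]
    by (simp add: norm_mult mult_left_mono)
  have g_lim: "(\<lambda>N. g N x) \<longlonglongrightarrow> u x * trig_series c x * exp (- \<i> * of_int k * of_real x)" for x
    unfolding g_def by (intro tendsto_intros trig_series_symmetric_partial_sums c)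
  note dc = dominated_convergence[OF g_int dom_int g_le g_lim]
  have "(\<lambda>N. integral {0..2 * pi} (g N))
      \<longlonglongrightarrow> complex_of_real (2 * pi) * (\<Sum>\<^sub>\<infinity>m\<in>UNIV. fcoeff u (k - m) * c m)"
    unfolding g_def integral_mult_trig_poly[OF u finite_atLeastAtMost_int]
    by (intro tendsto_intros tendsto_infsum_symmetric_partial_sums summable_fcoeff_convolution u c)
  with dc show "(\<lambda>x. u x * trig_series c x * exp (- \<i> * of_int k * of_real x)) integrable_on {0..2 * pi}"
    and "integral {0..2 * pi} (\<lambda>x. u x * trig_series c x * exp (- \<i> * of_int k * of_real x))
      = complex_of_real (2 * pi) * (\<Sum>\<^sub>\<infinity>m\<in>UNIV. fcoeff u (k - m) * c m)"
    using LIMSEQ_unique by blast+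
qed

lemma fcoeff_mult_trig_series:
  assumes u: "in_L1T u" and c: "(\<lambda>m. norm (c m)) summable_on UNIV"
  shows "in_L1T (\<lambda>x. u x * trig_series c x)"
    and "fcoeff (\<lambda>x. u x * trig_series c x) n = (\<Sum>\<^sub>\<infinity>m\<in>UNIV. fcoeff u (n - m) * c m)"
proof -
  have "(\<lambda>x. u x * trig_series c x) absolutely_integrable_on {0..2 * pi}"
  proof (rule absolutely_integrable_integrable_bound)
    show "(\<lambda>x. u x * trig_series c x) integrable_on {0..2 * pi}"
      using integral_mult_trig_series(1)[OF u c, of 0] by simp
    show "(\<lambda>x. norm (u x) * (\<Sum>\<^sub>\<infinity>m\<in>UNIV. norm (c m))) integrable_on {0..2 * pi}"
      using u by (simp add: in_L1T_def absolutely_integrable_on_def integrable_on_mult_left)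
  qed (simp add: norm_mult mult_left_mono norm_trig_series_le[OF c])
  moreover have "trig_series c (x + 2 * pi) = trig_series c x" for x
    unfolding trig_series_def exp_i_int_times_periodic ..
  ultimately show "in_L1T (\<lambda>x. u x * trig_series c x)"
    using u by (simp add: in_L1T_def)
  show "fcoeff (\<lambda>x. u x * trig_series c x) n = (\<Sum>\<^sub>\<infinity>m\<in>UNIV. fcoeff u (n - m) * c m)"
    unfolding fcoeff_def integral_mult_trig_series(2)[OF u c] by simp
qed

lemma integral_exp_mult_of_real:
  assumes "0 \<le> T" and "a \<noteq> 0"
  shows "integral {0..T} (\<lambda>t. exp (a * complex_of_real t)) = (exp (a * of_real T) - 1) / a"
proof -
  have "((\<lambda>x. exp (a * x) / a) has_vector_derivative exp (a * t)) (at t within {0..T})"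
    if "t \<in> {0..T}" for t
    using assms
    by (intro derivative_eq_intros has_complex_derivative_imp_has_vector_derivative [unfolded o_def]
        | simp)+
  then have "((\<lambda>t. exp (a * of_real t)) has_integral
      exp (a * complex_of_real T) / a - exp (a * of_real 0) / a) {0..T}"
    by (meson fundamental_theorem_of_calculus assms(1))
  then show ?thesis
    by (simp add: diff_divide_distrib integral_unique)
qed

lemma in_L1T_const: "in_L1T (\<lambda>x. c)"
  unfolding in_L1T_def by (auto intro!: absolutely_integrable_continuous_real continuous_intros)

lemma fcoeff_one: "fcoeff (\<lambda>x. 1) k = (if k = 0 then 1 else 0)"
proof (cases "k = 0")
  case False
  have "integral {0..2 * pi} (\<lambda>x. exp ((- \<i> * of_int k) * of_real x))
      = (exp ((- \<i> * of_int k) * of_real (2 * pi)) - 1) / (- \<i> * of_int k)"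
    using False by (intro integral_exp_mult_of_real) auto
  also have "exp ((- \<i> * of_int k) * of_real (2 * pi)) = 1"
    using exp_integer_2pi[of "of_int (- k)"] by (simp add: algebra_simps)
  finally show ?thesis
    using False unfolding fcoeff_def by (simp add: mult.assoc)
qed (simp add: fcoeff_def scaleR_conv_of_real)

lemma fcoeff_trig_series:
  assumes "(\<lambda>m. norm (c m)) summable_on UNIV"
  shows "in_L1T (trig_series c)" and "fcoeff (trig_series c) n = c n"
proof -
  note product = fcoeff_mult_trig_series[OF in_L1T_const[of 1] assms]
  then show "in_L1T (trig_series c)" by simp
  have "fcoeff (trig_series c) n = (\<Sum>\<^sub>\<infinity>m\<in>UNIV. fcoeff (\<lambda>x. 1) (n - m) * c m)"
    using product(2) by simp
  also have "\<dots> = (\<Sum>\<^sub>\<infinity>m\<in>{n}. fcoeff (\<lambda>x. 1) (n - m) * c m)"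
    by (rule infsum_cong_neutral) (simp_all add: fcoeff_one)
  finally show "fcoeff (trig_series c) n = c n"
    by (simp add: fcoeff_one)
qed

section \<open>Derivatives and weighted norms\<close>

definition dx_coeff :: "nat \<Rightarrow> (real \<Rightarrow> complex) \<Rightarrow> int \<Rightarrow> complex" where
  "dx_coeff k g m = (\<i> * of_int m) ^ k * fcoeff g m"

lemma dx_eq_trig_series: "dx k g = trig_series (dx_coeff k g)"
  unfolding dx_def trig_series_def dx_coeff_def by (rule ext) simp

lemma fcoeff_eq_dx_coeff_0: "fcoeff g = dx_coeff 0 g"
  by (simp add: fun_eq_iff dx_coeff_def)

lemma wght_pos: "0 < wght s lam n"
  unfolding wght_def by simp

lemma wght_nonneg: "0 \<le> wght s lam n"
  using wght_pos less_imp_le by blast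

lemma wght_0: "wght 0 lam n = exp (lam * \<bar>real_of_int n\<bar>)"
proof -
  have "1 + \<bar>real_of_int n\<bar> \<noteq> 0"
    by linarith
  then show ?thesis
    by (simp add: wght_def)
qed

lemma wght_mono: "s' \<le> s \<Longrightarrow> wght s' lam n \<le> wght s lam n"
  unfolding wght_def by (intro mult_right_mono powr_mono) auto

lemma wght_eq_powr_mult_wght_0: "wght s lam n = (1 + \<bar>real_of_int n\<bar>) powr s * wght 0 lam n"
  unfolding wght_0 by (simp add: wght_def)

lemma wght_0_add_le: "0 \<le> lam \<Longrightarrow> wght 0 lam (p + q) \<le> wght 0 lam p * wght 0 lam q"
  unfolding wght_0 by (simp add: mult_left_mono abs_triangle_ineq flip: exp_add distrib_left)

lemma power_abs_le_wght:
  assumes "real k \<le> s" and "0 \<le> lam"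
  shows "\<bar>real_of_int m\<bar> ^ k \<le> wght s lam m"
proof -
  have "\<bar>real_of_int m\<bar> ^ k \<le> (1 + \<bar>real_of_int m\<bar>) ^ k"
    by (intro power_mono) auto
  also have "\<dots> = (1 + \<bar>real_of_int m\<bar>) powr k"
    by (simp add: powr_realpow)
  also have "\<dots> \<le> (1 + \<bar>real_of_int m\<bar>) powr s"
    using assms(1) by (intro powr_mono) auto
  also have "\<dots> \<le> wght s lam m"
    unfolding wght_def using assms(2) by (simp add: mult_le_cancel_left1)
  finally show ?thesis .
qed

lemma anorm_nonneg: "0 \<le> anorm s lam g"
  unfolding anorm_def by (intro infsum_nonneg) (simp add: wght_nonneg)

lemma in_A_mono:
  assumes "in_A s lam g" and "s' \<le> s"
  shows "in_A s' lam g"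
  using assms unfolding in_A_def
  by (auto elim!: summable_on_comparison_test intro: mult_right_mono wght_mono simp: wght_nonneg)

lemma summable_norm_dx_coeff:
  assumes "in_A s lam g" and "real k \<le> s" and "0 \<le> lam"
  shows "(\<lambda>m. norm (dx_coeff k g m)) summable_on UNIV"
  using assms unfolding in_A_def
  by (auto elim!: summable_on_comparison_test intro!: mult_right_mono power_abs_le_wght
      simp: dx_coeff_def norm_mult norm_power)

lemma dx_in_L1T_fcoeff:
  assumes "in_A s lam g" and "real k \<le> s" and "0 \<le> lam"
  shows "in_L1T (dx k g)" and "fcoeff (dx k g) = dx_coeff k g"
  using fcoeff_trig_series[OF summable_norm_dx_coeff[OF assms]] by (auto simp: dx_eq_trig_series)

lemma in_L1T_add: "in_L1T g \<Longrightarrow> in_L1T h \<Longrightarrow> in_L1T (\<lambda>x. g x + h x)"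
  unfolding in_L1T_def by (auto intro: set_integral_add(1))

lemma in_L1T_cmult: "in_L1T g \<Longrightarrow> in_L1T (\<lambda>x. a * g x)"
  using absolutely_integrable_mult_continuous[where u = g and v = "\<lambda>_. a"]
  by (simp add: in_L1T_def mult.commute)

lemma fcoeff_add:
  assumes "in_L1T g" and "in_L1T h"
  shows "fcoeff (\<lambda>x. g x + h x) n = fcoeff g n + fcoeff h n"
proof -
  have "integral {0..2 * pi} (\<lambda>x. (g x + h x) * exp (- \<i> * of_int n * of_real x))
      = integral {0..2 * pi} (\<lambda>x. g x * exp (- \<i> * of_int n * of_real x))
        + integral {0..2 * pi} (\<lambda>x. h x * exp (- \<i> * of_int n * of_real x))"
    by (simp only: distrib_right integral_add[OF in_L1T_mult_exp_integrable[OF assms(1)]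
          in_L1T_mult_exp_integrable[OF assms(2)]])
  then show ?thesis
    unfolding fcoeff_def by (simp add: distrib_left)
qed

lemma fcoeff_cmult: "fcoeff (\<lambda>x. a * g x) n = a * fcoeff g n"
  unfolding fcoeff_def by (simp add: mult.assoc mult.left_commute)

definition A_norm_le :: "real \<Rightarrow> real \<Rightarrow> (real \<Rightarrow> complex) \<Rightarrow> real \<Rightarrow> bool" where
  "A_norm_le s lam g B \<longleftrightarrow> in_A s lam g \<and> anorm s lam g \<le> B"

lemma A_norm_le_anorm: "in_A s lam g \<Longrightarrow> A_norm_le s lam g (anorm s lam g)"
  unfolding A_norm_le_def by simp

lemma A_norm_le_mono: "A_norm_le s lam g B \<Longrightarrow> B \<le> B' \<Longrightarrow> A_norm_le s lam g B'"
  unfolding A_norm_le_def by simp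

lemma A_norm_le_add:
  assumes "A_norm_le s lam g B" and "A_norm_le s lam h C"
  shows "A_norm_le s lam (\<lambda>x. g x + h x) (B + C)"
proof -
  have L1T: "in_L1T g" "in_L1T h"
    and g: "(\<lambda>n. wght s lam n * norm (fcoeff g n)) summable_on UNIV"
    and h: "(\<lambda>n. wght s lam n * norm (fcoeff h n)) summable_on UNIV"
    using assms by (auto simp: A_norm_le_def in_A_def)
  have le: "wght s lam n * norm (fcoeff (\<lambda>x. g x + h x) n)
      \<le> wght s lam n * norm (fcoeff g n) + wght s lam n * norm (fcoeff h n)" for n
    unfolding fcoeff_add[OF L1T] distrib_left[symmetric]
    by (intro mult_left_mono norm_triangle_ineq wght_nonneg)
  have sum: "(\<lambda>n. wght s lam n * norm (fcoeff (\<lambda>x. g x + h x) n)) summable_on UNIV"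
    by (rule summable_on_comparison_test[OF summable_on_add[OF g h] le])
       (simp add: wght_nonneg)
  have "anorm s lam (\<lambda>x. g x + h x) \<le> anorm s lam g + anorm s lam h"
    unfolding anorm_def infsum_add[OF g h, symmetric]
    by (rule infsum_mono[OF sum summable_on_add[OF g h] le])
  then show ?thesis
    using assms sum in_L1T_add[OF L1T] by (auto simp: A_norm_le_def in_A_def)
qed

lemma A_norm_le_cmult:
  assumes "A_norm_le s lam g B"
  shows "A_norm_le s lam (\<lambda>x. a * g x) (norm a * B)"
proof -
  have g: "(\<lambda>n. wght s lam n * norm (fcoeff g n)) summable_on UNIV"
    using assms by (simp add: A_norm_le_def in_A_def)
  have eq: "wght s lam n * norm (fcoeff (\<lambda>x. a * g x) n) = norm a * (wght s lam n * norm (fcoeff g n))"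
    for n by (simp add: fcoeff_cmult norm_mult)
  show ?thesis
    using assms summable_on_cmult_right[OF g] infsum_cmult_right[OF g, of "norm a"]
    by (auto simp: A_norm_le_def in_A_def anorm_def eq in_L1T_cmult mult_left_mono)
qed

lemma anorm_le_anorm_add:
  assumes "in_A s lam f" and "in_A s lam z"
  shows "anorm s lam f \<le> anorm s lam (\<lambda>x. z x + f x) + anorm s lam z"
proof -
  have "A_norm_le s lam (\<lambda>x. z x + f x) (anorm s lam z + anorm s lam f)"
    using assms by (intro A_norm_le_add A_norm_le_anorm)
  then have "A_norm_le s lam (\<lambda>x. (z x + f x) + (-1) * z x)
      (anorm s lam (\<lambda>x. z x + f x) + norm (-1::complex) * anorm s lam z)"
    using assms by (intro A_norm_le_add A_norm_le_cmult A_norm_le_anorm) (simp_all add: A_norm_le_def)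
  then show ?thesis
    by (simp add: A_norm_le_def)
qed

section \<open>Weighted convolution estimates\<close>

lemma has_sum_product_pairs:
  fixes X Y :: "'a \<Rightarrow> real"
  assumes X: "X summable_on UNIV" and Y: "Y summable_on UNIV"
    and nonneg: "\<And>p. 0 \<le> X p" "\<And>q. 0 \<le> Y q"
  shows "((\<lambda>(p, q). X p * Y q) has_sum (infsum X UNIV * infsum Y UNIV)) UNIV"
proof -
  have rows: "((\<lambda>q. (\<lambda>(p, q). X p * Y q) (p, q)) has_sum X p * infsum Y UNIV) UNIV" for p
    using has_sum_cmult_right[OF has_sum_infsum[OF Y]] by simp
  have total: "((\<lambda>p. X p * infsum Y UNIV) has_sum infsum X UNIV * infsum Y UNIV) UNIV"
    using has_sum_cmult_left[OF has_sum_infsum[OF X]] .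
  have "(\<lambda>(p, q). X p * Y q) summable_on UNIV \<times> UNIV"
    by (rule summable_on_SigmaI[OF rows has_sum_imp_summable[OF total]]) (simp add: nonneg)
  then show ?thesis
    using has_sum_SigmaI[OF rows total] by simp
qed

lemma weighted_convolution_le:
  fixes a b :: "int \<Rightarrow> complex" and v :: "int \<Rightarrow> real" and W :: "int \<times> int \<Rightarrow> real"
  assumes W: "(W has_sum T) UNIV" and v: "\<And>n. 0 < v n"
    and kernel: "\<And>p q. v (p + q) * (norm (a p) * norm (b q)) \<le> W (p, q)"
  shows "(\<lambda>n. v n * norm (\<Sum>\<^sub>\<infinity>q\<in>UNIV. a (n - q) * b q)) summable_on UNIV"
    and "(\<Sum>\<^sub>\<infinity>n\<in>UNIV. v n * norm (\<Sum>\<^sub>\<infinity>q\<in>UNIV. a (n - q) * b q)) \<le> T"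
proof -
  define K where "K n = (\<lambda>q. v n * norm (a (n - q) * b q))" for n
  have W_shifted: "((\<lambda>(n, q). W (n - q, q)) has_sum T) UNIV"
    by (rule has_sum_reindex_bij_witness[where i = "\<lambda>(p, q). (p + q, q)" and j = "\<lambda>(n, q). (n - q, q)",
          THEN iffD2, OF _ _ _ _ _ refl W]) (auto simp: case_prod_unfold)
  have K_le: "K n q \<le> W (n - q, q)" for n q
    using kernel[of "n - q" q] by (simp add: K_def norm_mult)
  have K_nonneg: "0 \<le> K n q" for n q
    using v[of n] by (simp add: K_def)
  have K: "(\<lambda>(n, q). K n q) summable_on UNIV \<times> UNIV"
    using summable_on_comparison_test[OF has_sum_imp_summable[OF W_shifted]] K_le K_nonneg
    by (simp add: case_prod_unfold)
  have K_le_T: "(\<Sum>\<^sub>\<infinity>(n, q)\<in>UNIV. K n q) \<le> T"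
    using infsum_mono[OF _ has_sum_imp_summable[OF W_shifted]] K K_le W_shifted infsumI
    by (fastforce simp: case_prod_unfold)
  have row_sums: "(\<lambda>n. infsum (K n) UNIV) summable_on UNIV"
    using summable_on_Sigma_banach[OF K] by simp
  have bound: "v n * norm (\<Sum>\<^sub>\<infinity>q\<in>UNIV. a (n - q) * b q) \<le> infsum (K n) UNIV" for n
  proof -
    have "(\<lambda>q. 1 / v n * K n q) summable_on UNIV"
      using summable_on_SigmaD1[OF K] by (intro summable_on_cmult_right) auto
    then have "(\<lambda>q. norm (a (n - q) * b q)) summable_on UNIV"
      using v[of n] by (simp add: K_def)
    then have "norm (\<Sum>\<^sub>\<infinity>q\<in>UNIV. a (n - q) * b q) \<le> (\<Sum>\<^sub>\<infinity>q\<in>UNIV. norm (a (n - q) * b q))"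
      by (rule norm_infsum_bound)
    then show ?thesis
      using v[of n] by (simp add: K_def infsum_cmult_right')
  qed
  show summable: "(\<lambda>n. v n * norm (\<Sum>\<^sub>\<infinity>q\<in>UNIV. a (n - q) * b q)) summable_on UNIV"
    by (rule summable_on_comparison_test[OF row_sums bound]) (simp add: less_imp_le[OF v])
  have "infsum (\<lambda>n. infsum (K n) UNIV) UNIV \<le> T"
    using K_le_T infsum_Sigma'_banach[OF K] by simp
  then show "(\<Sum>\<^sub>\<infinity>n\<in>UNIV. v n * norm (\<Sum>\<^sub>\<infinity>q\<in>UNIV. a (n - q) * b q)) \<le> T"
    using infsum_mono[OF summable row_sums bound] by linarith
qed

lemma mult_powers_le_Young:
  fixes x y a b s :: real
  assumes "0 \<le> x" "0 \<le> y" "real j \<le> a" "real k \<le> b" "a + b = s" "0 < s"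
  shows "x ^ j * y ^ k \<le> a / s * (1 + x) powr s + b / s * (1 + y) powr s"
proof -
  have power_le: "t ^ i \<le> (1 + t) powr e" if "0 \<le> t" "real i \<le> e" for t e and i :: nat
  proof -
    have "t ^ i \<le> (1 + t) ^ i"
      using that by (intro power_mono) auto
    also have "\<dots> = (1 + t) powr i"
      using that by (simp add: powr_realpow)
    also have "\<dots> \<le> (1 + t) powr e"
      using that by (intro powr_mono) auto
    finally show ?thesis .
  qed
  have "x ^ j * y ^ k \<le> (1 + x) powr a * (1 + y) powr b"
    using assms by (intro mult_mono power_le) auto
  also have "\<dots> = ((1 + x) powr s) powr (a / s) * ((1 + y) powr s) powr (b / s)"
    using assms by (simp add: powr_powr)
  also have "\<dots> \<le> a / s * (1 + x) powr s + b / s * (1 + y) powr s"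
    using assms by (intro Youngs_inequality_0) (auto simp flip: add_divide_distrib)
  finally show ?thesis .
qed

lemma wght_mult_dx_coeff_le:
  assumes lam: "0 \<le> lam" and split: "real j \<le> a" "real k \<le> b" "a + b = s" "0 < s"
  shows "wght 0 lam (p + q) * (norm (dx_coeff j A p) * norm (dx_coeff k G q))
    \<le> a / s * (wght s lam p * norm (fcoeff A p) * (wght 0 lam q * norm (fcoeff G q)))
      + b / s * (wght 0 lam p * norm (fcoeff A p) * (wght s lam q * norm (fcoeff G q)))"
proof -
  have "norm (dx_coeff j A p) * norm (dx_coeff k G q)
      = (\<bar>real_of_int p\<bar> ^ j * \<bar>real_of_int q\<bar> ^ k) * (norm (fcoeff A p) * norm (fcoeff G q))"
    by (simp add: dx_coeff_def norm_mult norm_power mult_ac)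
  then have "wght 0 lam (p + q) * (norm (dx_coeff j A p) * norm (dx_coeff k G q))
      \<le> (wght 0 lam p * wght 0 lam q) * ((\<bar>real_of_int p\<bar> ^ j * \<bar>real_of_int q\<bar> ^ k)
          * (norm (fcoeff A p) * norm (fcoeff G q)))"
    by (metis mult_right_mono wght_0_add_le[OF lam] zero_le_mult_iff norm_ge_zero zero_le_power abs_ge_zero)
  also have "\<dots> \<le> (wght 0 lam p * wght 0 lam q) * ((a / s * (1 + \<bar>real_of_int p\<bar>) powr s
          + b / s * (1 + \<bar>real_of_int q\<bar>) powr s) * (norm (fcoeff A p) * norm (fcoeff G q)))"
    using split by (intro mult_left_mono mult_right_mono mult_powers_le_Young) (auto simp: wght_nonneg)
  also have "\<dots> = a / s * (wght s lam p * norm (fcoeff A p) * (wght 0 lam q * norm (fcoeff G q)))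
      + b / s * (wght 0 lam p * norm (fcoeff A p) * (wght s lam q * norm (fcoeff G q)))"
    unfolding wght_eq_powr_mult_wght_0[of s] by (simp add: algebra_simps)
  finally show ?thesis .
qed

text \<open>Only the Fourier coefficients of \<open>u\<close> enter, so \<open>u = A\<close> itself is covered (with \<open>j = 0\<close>),
  although \<open>dx 0 A\<close> agrees with \<open>A\<close> only almost everywhere.\<close>

lemma A_norm_le_mult_dx:
  fixes u A G :: "real \<Rightarrow> complex" and a b s :: real
  assumes u: "in_L1T u" "fcoeff u = dx_coeff j A"
    and A: "in_A s lam A" and G: "in_A s lam G" and lam: "0 \<le> lam"
    and split: "real j \<le> a" "real k \<le> b" "a + b = s" "0 < s"
  shows "A_norm_le 0 lam (\<lambda>x. u x * dx k G x)
    (a / s * anorm s lam A * anorm 0 lam G + b / s * anorm 0 lam A * anorm s lam G)"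
proof -
  have "real k \<le> s"
    using split by linarith
  note coeff_sum = summable_norm_dx_coeff[OF G this lam]
  have coeff: "fcoeff (\<lambda>x. u x * dx k G x) n = (\<Sum>\<^sub>\<infinity>q\<in>UNIV. dx_coeff j A (n - q) * dx_coeff k G q)"
    for n using fcoeff_mult_trig_series(2)[OF u(1) coeff_sum] by (simp add: dx_eq_trig_series u(2))
  define X where "X t = (\<lambda>p. wght t lam p * norm (fcoeff A p))" for t
  define Y where "Y t = (\<lambda>q. wght t lam q * norm (fcoeff G q))" for t
  have summable: "X s summable_on UNIV" "X 0 summable_on UNIV" "Y s summable_on UNIV" "Y 0 summable_on UNIV"
    using A G in_A_mono[OF A, of 0] in_A_mono[OF G, of 0] split
    by (auto simp: X_def Y_def in_A_def)
  have nonneg: "0 \<le> X t p" "0 \<le> Y t p" for t p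
    by (simp_all add: X_def Y_def wght_nonneg)
  define W where "W = (\<lambda>(p, q). a / s * (X s p * Y 0 q) + b / s * (X 0 p * Y s q))"
  have "(W has_sum (a / s * (infsum (X s) UNIV * infsum (Y 0) UNIV)
      + b / s * (infsum (X 0) UNIV * infsum (Y s) UNIV))) UNIV"
    using has_sum_add[OF has_sum_cmult_right[OF has_sum_product_pairs[OF summable(1,4) nonneg(1,2)], of "a / s"]
        has_sum_cmult_right[OF has_sum_product_pairs[OF summable(2,3) nonneg(1,2)], of "b / s"]]
    by (rule has_sum_cong[THEN iffD1, rotated]) (auto simp: W_def)
  then have W: "(W has_sum (a / s * anorm s lam A * anorm 0 lam G + b / s * anorm 0 lam A * anorm s lam G)) UNIV"
    by (simp add: anorm_def X_def Y_def mult.assoc)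
  have kernel: "wght 0 lam (p + q) * (norm (dx_coeff j A p) * norm (dx_coeff k G q)) \<le> W (p, q)" for p q
    unfolding W_def X_def Y_def using wght_mult_dx_coeff_le[OF lam split] by simp
  show ?thesis
    using weighted_convolution_le[OF W wght_pos kernel] u(1) coeff_sum
    unfolding A_norm_le_def in_A_def anorm_def coeff
    by (auto intro: fcoeff_mult_trig_series(1) simp: dx_eq_trig_series)
qed

lemma A_norm_le_N1:
  assumes f: "in_A 4 lam f" and z: "in_A 4 lam z" and lam: "0 \<le> lam"
  shows "A_norm_le 0 lam (N1 f z) (2 * (anorm 0 lam f * anorm 4 lam f
    + anorm 0 lam f * anorm 4 lam z + anorm 0 lam z * anorm 4 lam f))"
proof -
  let ?F0 = "anorm 0 lam f" and ?F4 = "anorm 4 lam f"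
    and ?Z0 = "anorm 0 lam z" and ?Z4 = "anorm 4 lam z"
  have L1T: "in_L1T f" "in_L1T z"
    using f z by (simp_all add: in_A_def)
  have d1: "in_L1T (dx 1 f)" "fcoeff (dx 1 f) = dx_coeff 1 f"
    "in_L1T (dx 1 z)" "fcoeff (dx 1 z) = dx_coeff 1 z"
    using dx_in_L1T_fcoeff[OF f, of 1] dx_in_L1T_fcoeff[OF z, of 1] lam by simp_all
  have "A_norm_le 0 lam (N1 f z)
     ((0/4 * ?F4 * ?F0 + 4/4 * ?F0 * ?F4) + (1/4 * ?F4 * ?F0 + 3/4 * ?F0 * ?F4)
      + (0/4 * ?F4 * ?Z0 + 4/4 * ?F0 * ?Z4) + (0/4 * ?Z4 * ?F0 + 4/4 * ?Z0 * ?F4)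
      + (1/4 * ?F4 * ?Z0 + 3/4 * ?F0 * ?Z4) + (1/4 * ?Z4 * ?F0 + 3/4 * ?Z0 * ?F4))"
    unfolding N1_def[abs_def]
    by (intro A_norm_le_add f z
        A_norm_le_mult_dx[OF L1T(1) fcoeff_eq_dx_coeff_0 f _ lam]
        A_norm_le_mult_dx[OF L1T(2) fcoeff_eq_dx_coeff_0 z _ lam]
        A_norm_le_mult_dx[OF d1(1,2) f _ lam] A_norm_le_mult_dx[OF d1(3,4) z _ lam]) simp_all
  then show ?thesis
    by (rule A_norm_le_mono) (simp add: algebra_simps)
qed

lemma A_norm_le_N2:
  assumes f: "in_A 4 lam f" and z: "in_A 4 lam z" and lam: "0 \<le> lam"
  shows "A_norm_le 0 lam (N2 f z) (2 * (anorm 0 lam f * anorm 4 lam f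
    + anorm 0 lam f * anorm 4 lam z + anorm 0 lam z * anorm 4 lam f))"
proof -
  let ?F0 = "anorm 0 lam f" and ?F4 = "anorm 4 lam f"
    and ?Z0 = "anorm 0 lam z" and ?Z4 = "anorm 4 lam z"
  have L1T: "in_L1T f" "in_L1T z"
    using f z by (simp_all add: in_A_def)
  have d1: "in_L1T (dx 1 f)" "fcoeff (dx 1 f) = dx_coeff 1 f"
    using dx_in_L1T_fcoeff[OF f, of 1] lam by simp_all
  have N2_eq: "N2 f z = (\<lambda>x. f x * dx 2 f x + dx 1 f x * dx 1 f x + f x * dx 2 z x
      + 2 * (dx 1 f x * dx 1 z x) + z x * dx 2 f x)"
    by (simp add: fun_eq_iff N2_def power2_eq_square mult.assoc)
  have "A_norm_le 0 lam (N2 f z)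
     ((0/4 * ?F4 * ?F0 + 4/4 * ?F0 * ?F4) + (2/4 * ?F4 * ?F0 + 2/4 * ?F0 * ?F4)
      + (0/4 * ?F4 * ?Z0 + 4/4 * ?F0 * ?Z4) + norm (2::complex) * (2/4 * ?F4 * ?Z0 + 2/4 * ?F0 * ?Z4)
      + (0/4 * ?Z4 * ?F0 + 4/4 * ?Z0 * ?F4))"
    unfolding N2_eq
    by (intro A_norm_le_add A_norm_le_cmult f z
        A_norm_le_mult_dx[OF L1T(1) fcoeff_eq_dx_coeff_0 f _ lam]
        A_norm_le_mult_dx[OF L1T(2) fcoeff_eq_dx_coeff_0 z _ lam]
        A_norm_le_mult_dx[OF d1 f _ lam]) simp_all
  then show ?thesis
    by (rule A_norm_le_mono) (simp add: algebra_simps)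
qed

theorem proposition6p2:
  fixes eps Bo nu t :: real and f zapp :: "real \<Rightarrow> complex"
  assumes "0 < eps" and "eps \<le> 1" and "0 < Bo" and "0 \<le> nu" and "0 \<le> t"
    and "in_A 4 (nu * t) f" and "in_A 4 (nu * t) zapp"
  defines "zMU \<equiv> (\<lambda>x. zapp x + f x)"
  shows "in_A 0 (nu * t) (N1 f zapp) \<and> in_A 0 (nu * t) (N2 f zapp) \<and>
    eps / Bo * anorm 0 (nu * t) (N1 f zapp) + eps * anorm 0 (nu * t) (N2 f zapp)
    \<le> 2 * eps * (1 / Bo + 1) *
       (anorm 0 (nu * t) zapp * anorm 4 (nu * t) f
        + (2 * anorm 4 (nu * t) zapp + anorm 4 (nu * t) zMU) * anorm 0 (nu * t) f)"
proof -
  define lam where "lam = nu * t"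
  have lam: "0 \<le> lam"
    using assms by (simp add: lam_def)
  have f: "in_A 4 lam f" and z: "in_A 4 lam zapp"
    using assms by (simp_all add: lam_def)
  let ?F0 = "anorm 0 lam f" and ?F4 = "anorm 4 lam f"
    and ?Z0 = "anorm 0 lam zapp" and ?Z4 = "anorm 4 lam zapp" and ?M4 = "anorm 4 lam zMU"
  let ?R = "?Z0 * ?F4 + (2 * ?Z4 + ?M4) * ?F0"
  have "?F4 \<le> ?M4 + ?Z4"
    unfolding zMU_def by (rule anorm_le_anorm_add[OF f z])
  then have "?F0 * ?F4 \<le> ?F0 * (?M4 + ?Z4)"
    by (rule mult_left_mono[OF _ anorm_nonneg])
  then have "2 * (?F0 * ?F4 + ?F0 * ?Z4 + ?Z0 * ?F4) \<le> 2 * ?R"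
    by (simp add: algebra_simps)
  then have N1: "A_norm_le 0 lam (N1 f zapp) (2 * ?R)" and N2: "A_norm_le 0 lam (N2 f zapp) (2 * ?R)"
    using A_norm_le_mono[OF A_norm_le_N1[OF f z lam]] A_norm_le_mono[OF A_norm_le_N2[OF f z lam]]
    by blast+
  have "eps / Bo * anorm 0 lam (N1 f zapp) + eps * anorm 0 lam (N2 f zapp) \<le> eps / Bo * (2 * ?R) + eps * (2 * ?R)"
    using N1 N2 assms by (intro add_mono mult_left_mono) (simp_all add: A_norm_le_def)
  also have "\<dots> = 2 * eps * (1 / Bo + 1) * ?R"
    by (simp add: algebra_simps)
  finally show ?thesis
    using N1 N2 by (simp add: A_norm_le_def lam_def)
qed

end
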